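(* Let $R$ be a commutative domain, $B=R(t,\sigma,H,J)$, $M$ an $R$-weight $B$-module, $\mathfrak m\in\operatorname{Maxspec}(R)$ and $0\neq w\in M_{\mathfrak m}$. If $B_1w=0$ then $\sigma(\mathfrak m)\in\mathcal S(B)$. If $B_{-1}w=0$ then $\mathfrak m\in\mathcal S(B)$.
   Context: $\Bbbk$ is a field; all algebras are associative unital $\Bbbk$-algebras. For an algebra $R$ and $\sigma\in\operatorname{Aut}_\Bbbk(R)$, $R[t,t^{-1};\sigma]$ is the skew Laurent ring: generated over $R$ by $t,t^{-1}$ with $tt^{-1}=t^{-1}t=1$ and $t^{\pm1}r=\sigma^{\pm1}(r)t^{\pm1}$ for $r\in R$. Given two-sided ideals $H,J$ of $R$, set $I^{(0)}=R$, $I^{(n)}=J\sigma(J)\cdots\sigma^{n-1}(J)$ for $n\ge1$, and $I^{(n)}=\sigma^{-1}(H)\sigma^{-2}(H)\cdots\sigma^{n}(H)$ for $n\le-1$; it is assumed throughout that $I^{(n)}\neq0$ for all $n\in\mathbb Z$. The Bell–Rogalski (BR) algebra is $R(t,\sigma,H,J)=\bigoplus_{n\in\mathbb Z}I^{(n)}t^n\subseteq R[t,t^{-1};\sigma]$; write $B_n=I^{(n)}t^n$. For $R$ commutative, $\mathcal S(B)=\{\mathfrak p\in\operatorname{Spec}(R):\mathfrak p\supseteq HJ\}$. For $R$ a commutative domain, a left $B$-module $M$ is an $R$-weight module if $M=\bigoplus_{\mathfrak m\in\operatorname{Maxspec}(R)}M_{\mathfrak m}$ where $M_{\mathfrak m}=\{v\in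 M:\mathfrak m v=0\}$ and $\dim_{R/\mathfrak m}M_{\mathfrak m}<\infty$ for all $\mathfrak m$. *)

theory Defs
  imports Main
begin

definition is_ideal :: "'r::comm_ring_1 set \<Rightarrow> bool" where
  "is_ideal I \<longleftrightarrow> 0 \<in> I \<and> (\<forall>a\<in>I. \<forall>b\<in>I. a + b \<in> I) \<and> (\<forall>a\<in>I. - a \<in> I)
      \<and> (\<forall>r. \<forall>a\<in>I. r * a \<in> I)"

definition ideal_prod :: "'r::comm_ring_1 set \<Rightarrow> 'r set \<Rightarrow> 'r set" where
  "ideal_prod I J = \<Inter>{K. is_ideal K \<and> {a * b |a b. a \<in> I \<and> b \<in> J} \<subseteq> K}"

definition prime_ideal :: "'r::comm_ring_1 set \<Rightarrow> bool" where
  "prime_ideal P \<longleftrightarrow> is_ideal P \<and> P \<noteq> UNIV \<and> (\<forall>a b. a * b \<in> P \<longrightarrow> a \<in> P \<or> b \<in> P)"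

definition maximal_ideal :: "'r::comm_ring_1 set \<Rightarrow> bool" where
  "maximal_ideal m \<longleftrightarrow> is_ideal m \<and> m \<noteq> UNIV \<and>
      (\<forall>K. is_ideal K \<and> m \<subseteq> K \<longrightarrow> K = m \<or> K = UNIV)"

definition ring_hom_fun :: "('a::ring_1 \<Rightarrow> 'b::ring_1) \<Rightarrow> bool" where
  "ring_hom_fun f \<longleftrightarrow> f 1 = 1 \<and> (\<forall>x y. f (x + y) = f x + f y) \<and> (\<forall>x y. f (x * y) = f x * f y)"

text \<open>\<open>\<sigma>\<close> is a k-algebra automorphism of R, where the k-algebra structure of R is
  given by the structure map \<open>\<phi> : k \<rightarrow> R\<close>.\<close>
definition k_automorphism :: "('k::field \<Rightarrow> 'r::comm_ring_1) \<Rightarrow> ('r \<Rightarrow> 'r) \<Rightarrow> bool" where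
  "k_automorphism \<phi> \<sigma> \<longleftrightarrow> bij \<sigma> \<and> ring_hom_fun \<sigma> \<and> (\<forall>c. \<sigma> (\<phi> c) = \<phi> c)"

definition sig_pow :: "('r \<Rightarrow> 'r) \<Rightarrow> int \<Rightarrow> 'r \<Rightarrow> 'r" where
  "sig_pow \<sigma> n = (if 0 \<le> n then \<sigma> ^^ nat n else (inv \<sigma>) ^^ nat (- n))"

text \<open>Elements are finitely supported coefficient functions \<open>f\<close>, standing for
  \<open>\<Sum>\<^sub>n f n t^n\<close>.\<close>
definition fin_supp :: "(int \<Rightarrow> 'r::zero) \<Rightarrow> bool" where
  "fin_supp f \<longleftrightarrow> finite {n. f n \<noteq> 0}"

definition skew_mono :: "int \<Rightarrow> 'r::zero \<Rightarrow> int \<Rightarrow> 'r" where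
  "skew_mono n r = (\<lambda>k. if k = n then r else 0)"

text \<open>Multiplication: \<open>(a t^i)(b t^j) = a \<sigma>^i(b) t^{i+j}\<close>.\<close>
definition skew_mult :: "('r::comm_ring_1 \<Rightarrow> 'r) \<Rightarrow> (int \<Rightarrow> 'r) \<Rightarrow> (int \<Rightarrow> 'r) \<Rightarrow> int \<Rightarrow> 'r" where
  "skew_mult \<sigma> f g = (\<lambda>n. \<Sum>i\<in>{i. f i \<noteq> 0}. f i * sig_pow \<sigma> i (g (n - i)))"

fun Ipos :: "('r::comm_ring_1 \<Rightarrow> 'r) \<Rightarrow> 'r set \<Rightarrow> nat \<Rightarrow> 'r set" where
  "Ipos \<sigma> J 0 = UNIV"
| "Ipos \<sigma> J (Suc n) = ideal_prod (Ipos \<sigma> J n) (sig_pow \<sigma> (int n) ` J)"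

fun Ineg :: "('r::comm_ring_1 \<Rightarrow> 'r) \<Rightarrow> 'r set \<Rightarrow> nat \<Rightarrow> 'r set" where
  "Ineg \<sigma> H 0 = UNIV"
| "Ineg \<sigma> H (Suc n) = ideal_prod (Ineg \<sigma> H n) (sig_pow \<sigma> (- int (Suc n)) ` H)"

text \<open>\<open>I^{(n)}\<close>: \<open>I^{(0)} = R\<close>, \<open>I^{(n)} = J\<sigma>(J)\<cdots>\<sigma>^{n-1}(J)\<close> for \<open>n \<ge> 1\<close>,
  \<open>I^{(n)} = \<sigma>^{-1}(H)\<sigma>^{-2}(H)\<cdots>\<sigma>^{n}(H)\<close> for \<open>n \<le> -1\<close>.\<close>
definition BR_I :: "('r::comm_ring_1 \<Rightarrow> 'r) \<Rightarrow> 'r set \<Rightarrow> 'r set \<Rightarrow> int \<Rightarrow> 'r set" where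
  "BR_I \<sigma> H J n = (if 0 \<le> n then Ipos \<sigma> J (nat n) else Ineg \<sigma> H (nat (- n)))"

text \<open>The BR algebra \<open>B = \<Oplus>\<^sub>n I^{(n)} t^n \<subseteq> R[t,t^{-1};\<sigma>]\<close>.\<close>
definition BR_alg :: "('r::comm_ring_1 \<Rightarrow> 'r) \<Rightarrow> 'r set \<Rightarrow> 'r set \<Rightarrow> (int \<Rightarrow> 'r) set" where
  "BR_alg \<sigma> H J = {f. fin_supp f \<and> (\<forall>n. f n \<in> BR_I \<sigma> H J n)}"

definition BR_comp :: "('r::comm_ring_1 \<Rightarrow> 'r) \<Rightarrow> 'r set \<Rightarrow> 'r set \<Rightarrow> int \<Rightarrow> (int \<Rightarrow> 'r) set" where
  "BR_comp \<sigma> H J n = {skew_mono n a |a. a \<in> BR_I \<sigma> H J n}"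

definition BR_S :: "'r::comm_ring_1 set \<Rightarrow> 'r set \<Rightarrow> 'r set set" where
  "BR_S H J = {p. prime_ideal p \<and> ideal_prod H J \<subseteq> p}"

definition left_module :: "('r::comm_ring_1 \<Rightarrow> 'r) \<Rightarrow> (int \<Rightarrow> 'r) set \<Rightarrow>
    ((int \<Rightarrow> 'r) \<Rightarrow> 'm::ab_group_add \<Rightarrow> 'm) \<Rightarrow> bool" where
  "left_module \<sigma> B act \<longleftrightarrow>
     (\<forall>f\<in>B. \<forall>v w. act f (v + w) = act f v + act f w)
   \<and> (\<forall>f\<in>B. \<forall>g\<in>B. \<forall>v. act (\<lambda>n. f n + g n) v = act f v + act g v)
   \<and> (\<forall>f\<in>B. \<forall>g\<in>B. \<forall>v. act (skew_mult \<sigma> f g) v = act f (act g v))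
   \<and> (\<forall>v. act (skew_mono 0 1) v = v)"

text \<open>\<open>M_\<mm> = {v \<in> M. \<mm> v = 0}\<close> (R acting through \<open>R = B_0\<close>).\<close>
definition weight_space :: "((int \<Rightarrow> 'r::comm_ring_1) \<Rightarrow> 'm::ab_group_add \<Rightarrow> 'm) \<Rightarrow> 'r set \<Rightarrow> 'm set" where
  "weight_space act m = {v. \<forall>r\<in>m. act (skew_mono 0 r) v = 0}"

text \<open>\<open>R\<close>-span (= \<open>R/\<mm>\<close>-span on \<open>M_\<mm>\<close>) of a finite set.\<close>
definition R_span :: "((int \<Rightarrow> 'r::comm_ring_1) \<Rightarrow> 'm::ab_group_add \<Rightarrow> 'm) \<Rightarrow> 'm set \<Rightarrow> 'm set" where
  "R_span act S = {\<Sum>s\<in>S. act (skew_mono 0 (c s)) s |c. True}"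

text \<open>\<open>M = \<Oplus>\<^sub>\<mm> M_\<mm>\<close> over maximal ideals, with each \<open>M_\<mm>\<close> finite-dimensional
  over \<open>R/\<mm>\<close> (i.e. spanned by finitely many vectors).\<close>
definition R_weight_module :: "((int \<Rightarrow> 'r::comm_ring_1) \<Rightarrow> 'm::ab_group_add \<Rightarrow> 'm) \<Rightarrow> bool" where
  "R_weight_module act \<longleftrightarrow>
     (\<forall>v. \<exists>F g. finite F \<and> (\<forall>m\<in>F. maximal_ideal m \<and> g m \<in> weight_space act m)
              \<and> v = (\<Sum>m\<in>F. g m))
   \<and> (\<forall>F g. finite F \<and> (\<forall>m\<in>F. maximal_ideal m \<and> g m \<in> weight_space act m)
              \<and> (\<Sum>m\<in>F. g m) = 0 \<longrightarrow> (\<forall>m\<in>F. g m = 0))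
   \<and> (\<forall>m. maximal_ideal m \<longrightarrow>
        (\<exists>S. finite S \<and> S \<subseteq> weight_space act m \<and> weight_space act m \<subseteq> R_span act S))"

end

theory Submission
  imports Defs
begin

text \<open>The annihilator of \<open>w\<close> in \<open>R = B\<^sub>0\<close> is an ideal containing the maximal ideal \<open>\<mm>\<close>
  but not \<open>1\<close>, hence equals \<open>\<mm>\<close>. For \<open>h \<in> H\<close>, \<open>j \<in> J\<close> we have
  \<open>(\<sigma>\<^sup>-\<^sup>1(h) t\<^sup>-\<^sup>1)(j t) = \<sigma>\<^sup>-\<^sup>1(hj)\<close> and \<open>(j t)(\<sigma>\<^sup>-\<^sup>1(h) t\<^sup>-\<^sup>1) = jh\<close>. So if \<open>B\<^sub>1 w = 0\<close>
  then \<open>\<sigma>\<^sup>-\<^sup>1(HJ) \<subseteq> \<mm>\<close>, i.e. \<open>HJ \<subseteq> \<sigma>(\<mm>)\<close>; if \<open>B\<^sub>-\<^sub>1 w = 0\<close> then \<open>HJ \<subseteq> \<mm>\<close>.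
  Both \<open>\<mm>\<close> and \<open>\<sigma>(\<mm>)\<close> are prime.\<close>

lemma ring_hom_fun_zero: "ring_hom_fun f \<Longrightarrow> f 0 = 0"
  unfolding ring_hom_fun_def by (metis add_cancel_right_right add_0)

lemma ring_hom_fun_uminus:
  assumes "ring_hom_fun f"
  shows "f (- x) = - f x"
proof -
  have "f (- x) + f x = f (- x + x)"
    using assms unfolding ring_hom_fun_def by metis
  then show ?thesis
    using ring_hom_fun_zero[OF assms] by (simp add: eq_neg_iff_add_eq_0)
qed

lemma ring_hom_fun_funpow:
  fixes f :: "'a::ring_1 \<Rightarrow> 'a"
  assumes "ring_hom_fun f"
  shows "ring_hom_fun (f ^^ n)"
  using assms by (induction n) (simp_all add: ring_hom_fun_def)

lemma ring_hom_fun_inv: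
  assumes "bij f" and "ring_hom_fun f"
  shows "ring_hom_fun (inv f)"
proof -
  have "inv f (f x) = x" for x
    using assms(1) by (simp add: bij_is_inj)
  moreover have "f (inv f y) = y" for y
    using assms(1) by (simp add: bij_is_surj surj_f_inv_f)
  ultimately show ?thesis
    using assms(2) unfolding ring_hom_fun_def by metis
qed

lemma ring_hom_fun_sig_pow:
  assumes "bij \<sigma>" and "ring_hom_fun \<sigma>"
  shows "ring_hom_fun (sig_pow \<sigma> n)"
  using ring_hom_fun_funpow[OF assms(2)] ring_hom_fun_funpow[OF ring_hom_fun_inv[OF assms]]
  by (simp add: sig_pow_def)

lemma ideal_prod_subset:
  "is_ideal K \<Longrightarrow> (\<And>a b. a \<in> I \<Longrightarrow> b \<in> J \<Longrightarrow> a * b \<in> K) \<Longrightarrow> ideal_prod I J \<subseteq> K"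
  unfolding ideal_prod_def by blast

lemma subset_ideal_prod_UNIV: "X \<subseteq> ideal_prod UNIV X"
  unfolding ideal_prod_def by (force intro: exI[of _ 1])

lemma zero_mem_ideal_prod: "0 \<in> ideal_prod I J"
  unfolding ideal_prod_def is_ideal_def by blast

lemma one_not_mem_ideal: "is_ideal I \<Longrightarrow> I \<noteq> UNIV \<Longrightarrow> 1 \<notin> I"
  unfolding is_ideal_def by (metis UNIV_eq_I mult.right_neutral)

lemma maximal_ideal_imp_prime_ideal:
  assumes max: "maximal_ideal m"
  shows "prime_ideal m"
proof -
  have m: "is_ideal m" "m \<noteq> UNIV"
    using max by (auto simp: maximal_ideal_def)
  have m_closed: "0 \<in> m" "x \<in> m \<Longrightarrow> y \<in> m \<Longrightarrow> x + y \<in> m"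
    "x \<in> m \<Longrightarrow> - x \<in> m" "x \<in> m \<Longrightarrow> r * x \<in> m" for x y r
    using m(1) by (auto simp: is_ideal_def)
  have "b \<in> m" if ab: "a * b \<in> m" and a: "a \<notin> m" for a b
  proof -
    define K where "K = {x + r * a |x r. x \<in> m}"
    have K_iff: "y \<in> K \<longleftrightarrow> (\<exists>x r. x \<in> m \<and> y = x + r * a)" for y
      by (auto simp: K_def)
    have K_intro: "x \<in> m \<Longrightarrow> x + r * a \<in> K" for x r
      by (auto simp: K_def)
    have "is_ideal K"
      unfolding is_ideal_def
    proof (intro conjI ballI allI)
      show "0 \<in> K"
        unfolding K_iff using m_closed(1) by (metis add_0 mult_zero_left)
    next
      fix p q assume "p \<in> K" "q \<in> K"
      then obtain x r y s where "x \<in> m" "y \<in> m" "p = x + r * a" "q = y + s * a"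
        unfolding K_iff by blast
      then have "x + y \<in> m \<and> p + q = (x + y) + (r + s) * a"
        using m_closed(2) by (simp add: algebra_simps)
      then show "p + q \<in> K"
        unfolding K_iff by blast
    next
      fix p assume "p \<in> K"
      then obtain x r where "x \<in> m" "p = x + r * a"
        unfolding K_iff by blast
      then have "- x \<in> m \<and> - p = - x + (- r) * a"
        using m_closed(3) by simp
      then show "- p \<in> K"
        unfolding K_iff by blast
    next
      fix s p assume "p \<in> K"
      then obtain x r where "x \<in> m" "p = x + r * a"
        unfolding K_iff by blast
      then have "s * x \<in> m" "s * p = s * x + (s * r) * a"
        using m_closed(4)[of x s] by (simp_all add: algebra_simps)
      then show "s * p \<in> K"
        unfolding K_iff by blast
    qed
    moreover have "m \<subseteq> K" "a \<in> K"
      using K_intro[of _ 0] K_intro[OF m_closed(1), of 1] by auto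
    ultimately have "K = UNIV"
      using max a unfolding maximal_ideal_def by blast
    then obtain x r where x: "x \<in> m" "1 = x + r * a"
      using K_iff by blast
    have "b = b * (x + r * a)"
      using x(2) by simp
    also have "\<dots> = b * x + r * (a * b)"
      by (simp add: algebra_simps)
    finally show "b \<in> m"
      using m_closed(2) m_closed(4)[OF x(1), of b] m_closed(4)[OF ab, of r] by metis
  qed
  then show ?thesis
    using m by (auto simp: prime_ideal_def)
qed

lemma prime_ideal_vimage:
  assumes f: "ring_hom_fun f" and P: "prime_ideal P"
  shows "prime_ideal (f -` P)"
proof -
  have P_ideal: "is_ideal P" and "1 \<notin> P"
    using P one_not_mem_ideal by (auto simp: prime_ideal_def)
  then have "f -` P \<noteq> UNIV"
    using f by (metis UNIV_I ring_hom_fun_def vimageE)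
  moreover have "is_ideal (f -` P)"
    using P_ideal f ring_hom_fun_zero[OF f] ring_hom_fun_uminus[OF f]
    by (simp add: is_ideal_def ring_hom_fun_def)
  ultimately show ?thesis
    using P f by (simp add: prime_ideal_def ring_hom_fun_def)
qed

lemma prime_ideal_image_bij:
  assumes "bij f" and "ring_hom_fun f" and "prime_ideal P"
  shows "prime_ideal (f ` P)"
proof -
  have "f ` P = inv f -` P"
    using assms(1) by (simp add: bij_vimage_eq_inv_image bij_imp_bij_inv inv_inv_eq)
  then show ?thesis
    using prime_ideal_vimage[OF ring_hom_fun_inv[OF assms(1,2)] assms(3)] by simp
qed

lemma zero_mem_BR_I: "0 \<in> BR_I \<sigma> H J n"
  unfolding BR_I_def
  by (cases "nat n"; cases "nat (- n)") (auto simp: zero_mem_ideal_prod)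

lemma BR_I_zero: "BR_I \<sigma> H J 0 = UNIV"
  by (simp add: BR_I_def)

lemma subset_BR_I_one: "J \<subseteq> BR_I \<sigma> H J 1"
  using subset_ideal_prod_UNIV by (simp add: BR_I_def sig_pow_def)

lemma inv_image_subset_BR_I_minus_one: "inv \<sigma> ` H \<subseteq> BR_I \<sigma> H J (- 1)"
  using subset_ideal_prod_UNIV by (simp add: BR_I_def sig_pow_def)

lemma skew_mono_mem_BR_alg: "a \<in> BR_I \<sigma> H J n \<Longrightarrow> skew_mono n a \<in> BR_alg \<sigma> H J"
  unfolding BR_alg_def fin_supp_def skew_mono_def
  by (auto simp: zero_mem_BR_I intro: finite_subset[of _ "{n}"])

lemma skew_mono_add:
  "(\<lambda>k. skew_mono n a k + skew_mono n b k) = skew_mono n (a + b :: 'r::comm_ring_1)"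
  by (auto simp: skew_mono_def fun_eq_iff)

lemma skew_mult_skew_mono:
  assumes "sig_pow \<sigma> i 0 = 0"
  shows "skew_mult \<sigma> (skew_mono i a) (skew_mono j b) = skew_mono (i + j) (a * sig_pow \<sigma> i b)"
proof (cases "a = 0")
  case True
  then show ?thesis by (simp add: skew_mult_def skew_mono_def fun_eq_iff)
next
  case False
  then have "{k. skew_mono i a k \<noteq> 0} = {i}"
    by (auto simp: skew_mono_def)
  then show ?thesis
    unfolding skew_mult_def using assms by (simp add: skew_mono_def fun_eq_iff)
qed

lemma mem_BR_S_if_products:
  assumes "prime_ideal p" and "\<And>h j. h \<in> H \<Longrightarrow> j \<in> J \<Longrightarrow> h * j \<in> p"
  shows "p \<in> BR_S H J"
  using assms ideal_prod_subset[of p H J] by (simp add: BR_S_def prime_ideal_def)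

locale BR_weight_vector =
  fixes \<sigma> :: "'r::comm_ring_1 \<Rightarrow> 'r" and H J :: "'r set"
    and act :: "(int \<Rightarrow> 'r) \<Rightarrow> 'm::ab_group_add \<Rightarrow> 'm"
    and m :: "'r set" and w :: 'm
  assumes bij: "bij \<sigma>" and hom: "ring_hom_fun \<sigma>"
    and module: "left_module \<sigma> (BR_alg \<sigma> H J) act"
    and maximal: "maximal_ideal m"
    and weight: "w \<in> weight_space act m" and nonzero: "w \<noteq> 0"
begin

lemma act_add_vector: "f \<in> BR_alg \<sigma> H J \<Longrightarrow> act f (u + v) = act f u + act f v"
  using module by (simp add: left_module_def)

lemma act_add_element:
  "f \<in> BR_alg \<sigma> H J \<Longrightarrow> g \<in> BR_alg \<sigma> H J \<Longrightarrow> act (\<lambda>n. f n + g n) v = act f v + act g v"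
  using module by (simp add: left_module_def)

lemma act_one: "act (skew_mono 0 1) v = v"
  using module by (simp add: left_module_def)

lemma act_zero_vector: "f \<in> BR_alg \<sigma> H J \<Longrightarrow> act f 0 = 0"
  using act_add_vector[of f 0 0] by simp

lemma act_skew_mono_mult:
  assumes "a \<in> BR_I \<sigma> H J i" and "b \<in> BR_I \<sigma> H J j"
  shows "act (skew_mono (i + j) (a * sig_pow \<sigma> i b)) v = act (skew_mono i a) (act (skew_mono j b) v)"
proof -
  have "sig_pow \<sigma> i 0 = 0"
    using ring_hom_fun_zero[OF ring_hom_fun_sig_pow[OF bij hom]] .
  then show ?thesis
    using module skew_mono_mem_BR_alg[OF assms(1)] skew_mono_mem_BR_alg[OF assms(2)]
    by (simp add: left_module_def skew_mult_skew_mono[symmetric])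
qed

lemma annihilator_eq_maximal_ideal: "act (skew_mono 0 r) w = 0 \<longleftrightarrow> r \<in> m"
proof -
  define A where "A = {r. act (skew_mono 0 r) w = 0}"
  have mono0: "skew_mono 0 r \<in> BR_alg \<sigma> H J" for r
    by (simp add: skew_mono_mem_BR_alg BR_I_zero)
  have add: "act (skew_mono 0 (r + s)) w = act (skew_mono 0 r) w + act (skew_mono 0 s) w" for r s
    using act_add_element[OF mono0 mono0] by (simp add: skew_mono_add)
  have mult: "act (skew_mono 0 (r * s)) w = act (skew_mono 0 r) (act (skew_mono 0 s) w)" for r s
    using act_skew_mono_mult[of r 0 s 0 w] by (simp add: BR_I_zero sig_pow_def)
  have zero: "0 \<in> A"
    using add[of 0 0] by (simp add: A_def)
  have "is_ideal A"
    unfolding is_ideal_def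
  proof (intro conjI ballI allI)
    fix a b assume "a \<in> A" "b \<in> A"
    then show "a + b \<in> A"
      using add[of a b] by (simp add: A_def)
  next
    fix a assume "a \<in> A"
    then show "- a \<in> A"
      using add[of "- a" a] zero by (simp add: A_def)
  next
    fix r a assume "a \<in> A"
    then show "r * a \<in> A"
      using mult[of r a] act_zero_vector[OF mono0] by (simp add: A_def)
  qed (rule zero)
  moreover have "m \<subseteq> A"
    using weight by (auto simp: weight_space_def A_def)
  moreover have "1 \<notin> A"
    using act_one nonzero by (simp add: A_def)
  ultimately have "A = m"
    using maximal unfolding maximal_ideal_def by blast
  then show ?thesis
    by (auto simp: A_def)
qed

lemma image_mem_BR_S_if_B1_annihilates:
  assumes B1: "\<forall>b\<in>BR_comp \<sigma> H J 1. act b w = 0"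
  shows "\<sigma> ` m \<in> BR_S H J"
proof -
  have prime: "prime_ideal (\<sigma> ` m)"
    using prime_ideal_image_bij[OF bij hom maximal_ideal_imp_prime_ideal[OF maximal]] .
  have "h * j \<in> \<sigma> ` m" if "h \<in> H" "j \<in> J" for h j
  proof -
    have h: "inv \<sigma> h \<in> BR_I \<sigma> H J (- 1)" and j: "j \<in> BR_I \<sigma> H J 1"
      using that inv_image_subset_BR_I_minus_one subset_BR_I_one by blast+
    have "act (skew_mono 1 j) w = 0"
      using B1 j by (auto simp: BR_comp_def)
    then have "act (skew_mono 0 (inv \<sigma> h * inv \<sigma> j)) w = 0"
      using act_skew_mono_mult[OF h j, of w] skew_mono_mem_BR_alg[OF h]
      by (simp add: sig_pow_def act_zero_vector)
    moreover have "inv \<sigma> h * inv \<sigma> j = inv \<sigma> (h * j)"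
      using ring_hom_fun_inv[OF bij hom] by (simp add: ring_hom_fun_def)
    ultimately have "inv \<sigma> (h * j) \<in> m"
      by (simp add: annihilator_eq_maximal_ideal)
    then show ?thesis
      using bij by (metis bij_inv_eq_iff image_eqI)
  qed
  then show ?thesis
    by (rule mem_BR_S_if_products[OF prime])
qed

lemma mem_BR_S_if_B_minus1_annihilates:
  assumes B_minus1: "\<forall>b\<in>BR_comp \<sigma> H J (- 1). act b w = 0"
  shows "m \<in> BR_S H J"
proof -
  have prime: "prime_ideal m"
    using maximal_ideal_imp_prime_ideal[OF maximal] .
  have "h * j \<in> m" if "h \<in> H" "j \<in> J" for h j
  proof -
    have h: "inv \<sigma> h \<in> BR_I \<sigma> H J (- 1)" and j: "j \<in> BR_I \<sigma> H J 1"
      using that inv_image_subset_BR_I_minus_one subset_BR_I_one by blast+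
    have "act (skew_mono (- 1) (inv \<sigma> h)) w = 0"
      using B_minus1 h by (auto simp: BR_comp_def)
    then have "act (skew_mono 0 (j * \<sigma> (inv \<sigma> h))) w = 0"
      using act_skew_mono_mult[OF j h, of w] skew_mono_mem_BR_alg[OF j]
      by (simp add: sig_pow_def act_zero_vector)
    moreover have "j * \<sigma> (inv \<sigma> h) = h * j"
      using bij by (simp add: bij_is_surj surj_f_inv_f mult.commute)
    ultimately show ?thesis
      by (simp add: annihilator_eq_maximal_ideal)
  qed
  then show ?thesis
    by (rule mem_BR_S_if_products[OF prime])
qed

end

theorem corollary3p2:
  fixes \<phi> :: "'k::field \<Rightarrow> 'r::idom"
    and \<sigma> :: "'r \<Rightarrow> 'r"
    and H J :: "'r set"
    and act :: "(int \<Rightarrow> 'r) \<Rightarrow> 'm::ab_group_add \<Rightarrow> 'm"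
    and m :: "'r set"
    and w :: 'm
  assumes "ring_hom_fun \<phi>"
    and "k_automorphism \<phi> \<sigma>"
    and "is_ideal H" and "is_ideal J"
    and "\<forall>n. BR_I \<sigma> H J n \<noteq> {0}"
    and "left_module \<sigma> (BR_alg \<sigma> H J) act"
    and "R_weight_module act"
    and "maximal_ideal m"
    and "w \<in> weight_space act m" and "w \<noteq> 0"
  shows "((\<forall>b\<in>BR_comp \<sigma> H J 1. act b w = 0) \<longrightarrow> \<sigma> ` m \<in> BR_S H J)
       \<and> ((\<forall>b\<in>BR_comp \<sigma> H J (-1). act b w = 0) \<longrightarrow> m \<in> BR_S H J)"
proof -
  interpret BR_weight_vector \<sigma> H J act m w
    using assms(2,6,8-10) by unfold_locales (simp_all add: k_automorphism_def)
  show ?thesis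
    using image_mem_BR_S_if_B1_annihilates mem_BR_S_if_B_minus1_annihilates by blast
qed

end
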